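(* Let $T\ge 1$ be an integer and let $v>0$, $c>0$, $k>0$, $\beta\in(0,1]$ with $kT<v$, and suppose $(1-\beta)c>\beta k$. Let $\varrho:=\lceil (1-\beta)c/(\beta k)\rceil$. Consider the stopping problem on times $\{0,1,\dots,T\}$ in which, from the perspective of time $t$, stopping at time $t+j$ ($0\le j\le T-t$) has value $\beta v-c$ if $j=0$ and $\beta(v-jk-c)$ if $j\ge1$. A (pure) strategy is a map $\sigma:\{0,\dots,T\}\to\{0,1\}$ with $\sigma(T)=1$ ($1$ = stop, $0$ = continue); for $t<T$ let $\tau_\sigma(t)=\min\{s>t:\sigma(s)=1\}$. Define: - the naive strategy $\sigma_0$: $\sigma_0(T)=1$ and for $t<T$, $\sigma_0(t)=1$ iff $\beta v-c\ge \max_{1\le j\le T-t}\beta(v-jk-c)$; - the update $\sigma\mapsto\sigma'$: $\sigma'(T)=1$ and for $t<T$, $\sigma'(t)=1$ iff $\beta v-c\ge \beta\big(v-(\tau_\sigma(t)-t)k-c\big)$; set $\sigma_{n+1}=\sigma_n'$ for $n\ge0$; - the sophisticated strategy $\sigma_S$: $\sigma_S(T)=1$ and, backward for $t=T-1,\dots,0$, $\sigma_S(t)=1$ iff $\beta v-c\ge\beta\big(v-(\tau_{\sigma_S}(t)-t)k-c\big)$. Then $\varrho\ge 2$, and $\sigma_n=\sigma_S$ for $n=2\big(\lceil (T+1)/\varrho\rceil-1\big)$; that is, the naive strategy is turned into the sophisticated one after $2(\lceil (T+1)/\varrho\rceil-1)$ rounds of training.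
   Context: This is the present-biased optimal stopping problem with immediate cost: stopping immediately costs $c$ now while the reward $v$ is received later (discounted by $\beta$); stopping $j\ge1$ periods later discounts both cost and reward by $\beta$ and reduces the reward by $jk$. The problem is state-independent, so strategies depend only on time. Ties are broken in favour of stopping. In each training round the agent at time $t$ chooses whether to stop now, taking as given that from time $t+1$ on she follows the previous round's strategy. *)

theory Defs
  imports Complex_Main
begin

text \<open>Strategies are maps nat => bool (True = stop); only their values on
  times 0..T matter. Parameters: horizon T, discount beta, reward v,
  immediate cost c, per-period reward reduction k.\<close>

definition tau :: "nat \<Rightarrow> (nat \<Rightarrow> bool) \<Rightarrow> nat \<Rightarrow> nat" where
  "tau T \<sigma> t = (LEAST s. t < s \<and> s \<le> T \<and> \<sigma> s)"

definition naive :: "nat \<Rightarrow> real \<Rightarrow> real \<Rightarrow> real \<Rightarrow> real \<Rightarrow> nat \<Rightarrow> bool" where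
  "naive T \<beta> v c k t =
     (T \<le> t \<or>
      \<beta> * v - c \<ge> Max ((\<lambda>j. \<beta> * (v - real j * k - c)) ` {1..T - t}))"

definition upd :: "nat \<Rightarrow> real \<Rightarrow> real \<Rightarrow> real \<Rightarrow> real \<Rightarrow> (nat \<Rightarrow> bool) \<Rightarrow> nat \<Rightarrow> bool" where
  "upd T \<beta> v c k \<sigma> t =
     (T \<le> t \<or> \<beta> * v - c \<ge> \<beta> * (v - real (tau T \<sigma> t - t) * k - c))"

definition trained :: "nat \<Rightarrow> real \<Rightarrow> real \<Rightarrow> real \<Rightarrow> real \<Rightarrow> nat \<Rightarrow> nat \<Rightarrow> bool" where
  "trained T \<beta> v c k n = ((upd T \<beta> v c k) ^^ n) (naive T \<beta> v c k)"

text \<open>Backward induction: soph_aux m has its decisions fixed at times T-m,...,T.\<close>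
fun soph_aux :: "nat \<Rightarrow> real \<Rightarrow> real \<Rightarrow> real \<Rightarrow> real \<Rightarrow> nat \<Rightarrow> nat \<Rightarrow> bool" where
  "soph_aux T \<beta> v c k 0 = (\<lambda>s. T \<le> s)"
| "soph_aux T \<beta> v c k (Suc m) =
     (let \<sigma> = soph_aux T \<beta> v c k m; t = T - Suc m in
        \<sigma>(t := (\<beta> * v - c \<ge> \<beta> * (v - real (tau T \<sigma> t - t) * k - c))))"

definition soph :: "nat \<Rightarrow> real \<Rightarrow> real \<Rightarrow> real \<Rightarrow> real \<Rightarrow> nat \<Rightarrow> bool" where
  "soph T \<beta> v c k = soph_aux T \<beta> v c k T"

end

theory Submission
  imports Defs
begin

text \<open>Stopping now beats stopping d periods later iff \<open>\<rho> \<le> d\<close>, so a round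
  of training stops at t exactly when the previous strategy does not stop at any
  of the times \<open>t+1, \<dots>, t+\<rho>-1\<close>. The naive strategy stops only at T. From a
  strategy stopping on the grid \<open>T, T-\<rho>, \<dots>, T-m\<rho>\<close> one round yields the same
  grid plus every time \<open>\<le> T-(m+1)\<rho>\<close>, and the next round yields the grid with
  one more point \<open>T-(m+1)\<rho>\<close>. The sophisticated strategy stops exactly on the full
  grid \<open>T - \<rho>\<nat>\<close>, which is reached as soon as \<open>(m+1)\<rho> > T\<close>.\<close>

lemma stop_now_iff_ceiling_le:
  fixes \<beta> v c k :: real and d :: nat
  assumes "0 < k" "0 < \<beta>"
  shows "\<beta> * v - c \<ge> \<beta> * (v - real d * k - c) \<longleftrightarrow> \<lceil>(1 - \<beta>) * c / (\<beta> * k)\<rceil> \<le> int d"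
proof -
  have "\<beta> * v - c \<ge> \<beta> * (v - real d * k - c) \<longleftrightarrow> (1 - \<beta>) * c \<le> real d * (\<beta> * k)"
    by (simp add: algebra_simps)
  also have "\<dots> \<longleftrightarrow> (1 - \<beta>) * c / (\<beta> * k) \<le> real d"
    using assms by (simp add: pos_divide_le_eq)
  finally show ?thesis
    by (simp add: ceiling_le_iff)
qed

lemma naive_iff:
  fixes \<beta> v c k :: real
  assumes "\<beta> * k < (1 - \<beta>) * c"
  shows "naive T \<beta> v c k t \<longleftrightarrow> T \<le> t"
proof (cases "T \<le> t")
  case False
  have "\<beta> * v - c < \<beta> * (v - real 1 * k - c)"
    using assms by (simp add: algebra_simps)
  also have "\<dots> \<le> Max ((\<lambda>j. \<beta> * (v - real j * k - c)) ` {1..T - t})"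
    using False by (intro Max_ge) auto
  finally show ?thesis
    using False unfolding naive_def by linarith
qed (simp add: naive_def)

lemma tau_least:
  assumes "t < T" "\<sigma> T"
  shows "t < tau T \<sigma> t" "tau T \<sigma> t \<le> T" "\<sigma> (tau T \<sigma> t)"
    and "\<And>u. t < u \<Longrightarrow> u < tau T \<sigma> t \<Longrightarrow> \<not> \<sigma> u"
proof -
  have "t < T \<and> T \<le> T \<and> \<sigma> T"
    using assms by simp
  then have "t < tau T \<sigma> t \<and> tau T \<sigma> t \<le> T \<and> \<sigma> (tau T \<sigma> t)"
    unfolding tau_def by (rule LeastI)
  then show "t < tau T \<sigma> t" "tau T \<sigma> t \<le> T" "\<sigma> (tau T \<sigma> t)"
    by simp_all
  show "\<not> \<sigma> u" if "t < u" "u < tau T \<sigma> t" for u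
    using that \<open>tau T \<sigma> t \<le> T\<close> not_less_Least unfolding tau_def by fastforce
qed

lemma grid_gap:
  fixes t u i j r :: nat
  assumes "t + i * r = u + j * r" "t < u"
  shows "t + r \<le> u"
proof -
  have "j * r < i * r"
    using assms by linarith
  then have "Suc j \<le> i"
    by (simp add: Suc_leI mult_less_cancel2)
  then have "j * r + r \<le> i * r"
    using mult_le_mono1[of "Suc j" i r] by simp
  then show ?thesis
    using assms(1) by linarith
qed

lemma less_Suc_mult: "0 < r \<Longrightarrow> n < Suc n * r"
  for n r :: nat
  using mult_le_mono2[of 1 r "Suc n"] by simp

definition stop_grid :: "nat \<Rightarrow> nat \<Rightarrow> nat \<Rightarrow> nat \<Rightarrow> bool" where
  "stop_grid T r m u \<longleftrightarrow> T \<le> u \<or> (\<exists>i\<le>m. u + i * r = T)"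

definition stop_grid_early :: "nat \<Rightarrow> nat \<Rightarrow> nat \<Rightarrow> nat \<Rightarrow> bool" where
  "stop_grid_early T r m u \<longleftrightarrow> stop_grid T r m u \<or> u + Suc m * r \<le> T"

lemma stop_grid_saturated:
  assumes "0 < r" "T < Suc m * r"
  shows "stop_grid T r m u \<longleftrightarrow> T \<le> u \<or> (\<exists>i. u + i * r = T)"
proof -
  have "i \<le> m" if "u + i * r = T" for i
  proof -
    have "i * r < Suc m * r"
      using that assms(2) by linarith
    then show ?thesis
      by (metis less_Suc_eq_le mult_less_cancel2)
  qed
  then show ?thesis
    unfolding stop_grid_def by blast
qed

lemma ex_stop_grid_in_window:
  assumes "t < T" "0 < r" "T < t + Suc m * r" "\<forall>i\<le>m. t + i * r \<noteq> T"
  shows "\<exists>u. t < u \<and> u < t + r \<and> stop_grid T r m u"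
proof -
  define j e where "j = (T - t) div r" and "e = (T - t) mod r"
  have split: "T - t = j * r + e"
    unfolding j_def e_def by simp
  have "e < r"
    unfolding e_def using assms(2) by simp
  have "j * r < Suc m * r"
    using split assms(1,3) by linarith
  then have "j \<le> m"
    by (metis less_Suc_eq_le mult_less_cancel2)
  then have "e \<noteq> 0"
    using assms(1,4) split by auto
  then show ?thesis
    using \<open>e < r\<close> \<open>j \<le> m\<close> split assms(1) unfolding stop_grid_def
    by (intro exI[of _ "t + e"]) auto
qed

lemma no_stop_grid_in_window:
  assumes "t + i * r = T" "0 < i" "t < u" "u < t + r"
  shows "\<not> stop_grid T r m u"
proof -
  have "r \<le> i * r"
    using assms(2) by simp
  then have "u < T"
    using assms(1,4) by linarith
  moreover have "u + j * r \<noteq> T" for j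
    using grid_gap[of t i r u j] assms(1,3,4) by linarith
  ultimately show ?thesis
    unfolding stop_grid_def by auto
qed

definition no_stop_in_window :: "nat \<Rightarrow> (nat \<Rightarrow> bool) \<Rightarrow> nat \<Rightarrow> bool" where
  "no_stop_in_window r \<sigma> t \<longleftrightarrow> (\<forall>u. t < u \<and> u < t + r \<longrightarrow> \<not> \<sigma> u)"

lemma no_stop_grid_in_window_iff:
  assumes "t < T" "0 < r"
  shows "no_stop_in_window r (stop_grid T r m) t \<longleftrightarrow> stop_grid_early T r m t"
proof
  assume window: "no_stop_in_window r (stop_grid T r m) t"
  show "stop_grid_early T r m t"
  proof (rule ccontr)
    assume "\<not> stop_grid_early T r m t"
    then have "T < t + Suc m * r" "\<forall>i\<le>m. t + i * r \<noteq> T"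
      unfolding stop_grid_early_def stop_grid_def by auto
    then show False
      using ex_stop_grid_in_window[OF assms] window unfolding no_stop_in_window_def by blast
  qed
next
  assume "stop_grid_early T r m t"
  then consider (grid) i where "t + i * r = T" "0 < i" | (early) "t + Suc m * r \<le> T"
    using assms(1) unfolding stop_grid_early_def stop_grid_def
    by (auto intro: gr0I)
  then show "no_stop_in_window r (stop_grid T r m) t"
  proof cases
    case grid
    then show ?thesis
      using no_stop_grid_in_window unfolding no_stop_in_window_def by blast
  next
    case early
    have "\<not> stop_grid T r m u" if "u < t + r" for u
    proof -
      have "u + j * r < T" if "j \<le> m" for j
      proof -
        have "j * r \<le> m * r"
          using \<open>j \<le> m\<close> by (rule mult_le_mono1)
        then show ?thesis
          using early \<open>u < t + r\<close> by (simp only: mult_Suc)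
      qed
      then show ?thesis
        using early \<open>u < t + r\<close> unfolding stop_grid_def by fastforce
    qed
    then show ?thesis
      unfolding no_stop_in_window_def by blast
  qed
qed

lemma no_stop_grid_early_in_window_iff:
  assumes "t < T" "2 \<le> r"
  shows "no_stop_in_window r (stop_grid_early T r m) t \<longleftrightarrow> stop_grid T r (Suc m) t"
proof
  assume window: "no_stop_in_window r (stop_grid_early T r m) t"
  show "stop_grid T r (Suc m) t"
  proof (rule ccontr)
    assume not_grid: "\<not> stop_grid T r (Suc m) t"
    have "\<not> t + 1 + Suc m * r \<le> T"
      using window assms(2) unfolding no_stop_in_window_def stop_grid_early_def by force
    moreover have "t + Suc m * r \<noteq> T"
      using not_grid unfolding stop_grid_def by blast
    ultimately have "T < t + Suc m * r"
      by linarith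
    moreover have "\<forall>i\<le>m. t + i * r \<noteq> T"
      using not_grid unfolding stop_grid_def by auto
    ultimately show False
      using ex_stop_grid_in_window[of t T r m] window assms
      unfolding no_stop_in_window_def stop_grid_early_def by auto
  qed
next
  assume "stop_grid T r (Suc m) t"
  then obtain i where i: "i \<le> Suc m" "t + i * r = T" "0 < i"
    using assms(1) unfolding stop_grid_def by (metis gr0I add_0_right mult_0 not_le order.refl)
  show "no_stop_in_window r (stop_grid_early T r m) t"
    unfolding no_stop_in_window_def stop_grid_early_def
  proof (intro allI impI notI)
    fix u assume u: "t < u \<and> u < t + r" and "stop_grid T r m u \<or> u + Suc m * r \<le> T"
    moreover have "i * r \<le> Suc m * r"
      using i(1) by (rule mult_le_mono1)
    ultimately show False
      using no_stop_grid_in_window[OF i(2,3)] i(2) by force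
  qed
qed

context
  fixes \<beta> v c k :: real and r :: nat
  assumes pos: "0 < k" "0 < \<beta>"
    and ceiling_eq: "\<lceil>(1 - \<beta>) * c / (\<beta> * k)\<rceil> = int r"
    and r_ge_2: "2 \<le> r"
begin

lemma upd_iff_no_stop_in_window:
  assumes "t < T" "\<sigma> T"
  shows "upd T \<beta> v c k \<sigma> t \<longleftrightarrow> no_stop_in_window r \<sigma> t"
proof -
  have "upd T \<beta> v c k \<sigma> t \<longleftrightarrow> r \<le> tau T \<sigma> t - t"
    unfolding upd_def using assms(1) stop_now_iff_ceiling_le[OF pos] ceiling_eq by simp
  also have "\<dots> \<longleftrightarrow> no_stop_in_window r \<sigma> t"
  proof
    assume "r \<le> tau T \<sigma> t - t"
    then show "no_stop_in_window r \<sigma> t"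
      using tau_least(4)[of t T \<sigma>] assms unfolding no_stop_in_window_def by fastforce
  next
    assume "no_stop_in_window r \<sigma> t"
    then show "r \<le> tau T \<sigma> t - t"
      using tau_least(1,3)[of t T \<sigma>] assms unfolding no_stop_in_window_def by fastforce
  qed
  finally show ?thesis .
qed

lemma upd_stop_grid: "upd T \<beta> v c k (stop_grid T r m) = stop_grid_early T r m"
proof
  fix t
  show "upd T \<beta> v c k (stop_grid T r m) t = stop_grid_early T r m t"
  proof (cases "t < T")
    case True
    then show ?thesis
      using r_ge_2 upd_iff_no_stop_in_window no_stop_grid_in_window_iff
      by (simp add: stop_grid_def)
  qed (simp add: upd_def stop_grid_early_def stop_grid_def)
qed

lemma upd_stop_grid_early: "upd T \<beta> v c k (stop_grid_early T r m) = stop_grid T r (Suc m)"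
proof
  fix t
  show "upd T \<beta> v c k (stop_grid_early T r m) t = stop_grid T r (Suc m) t"
  proof (cases "t < T")
    case True
    then show ?thesis
      using r_ge_2 upd_iff_no_stop_in_window no_stop_grid_early_in_window_iff
      by (simp add: stop_grid_early_def stop_grid_def)
  qed (simp add: upd_def stop_grid_def)
qed

lemma trained_even: "trained T \<beta> v c k (2 * m) = stop_grid T r m"
proof (induction m)
  case 0
  have "1 < (1 - \<beta>) * c / (\<beta> * k)"
    using ceiling_eq r_ge_2 by linarith
  then have "\<beta> * k < (1 - \<beta>) * c"
    using pos by (simp add: pos_less_divide_eq)
  then show ?case
    by (auto simp: trained_def stop_grid_def naive_iff)
next
  case (Suc m)
  have "trained T \<beta> v c k (2 * Suc m) = upd T \<beta> v c k (upd T \<beta> v c k (trained T \<beta> v c k (2 * m)))"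
    by (simp add: trained_def)
  then show ?case
    by (simp add: Suc upd_stop_grid upd_stop_grid_early)
qed

lemma soph_aux_eq:
  "m \<le> T \<Longrightarrow> soph_aux T \<beta> v c k m s \<longleftrightarrow> T - m \<le> s \<and> stop_grid T r T s"
proof (induction m arbitrary: s)
  case 0
  then show ?case
    by (auto simp: stop_grid_def)
next
  case (Suc m)
  define t where "t = T - Suc m"
  have "t < T" "T - m = Suc t"
    using Suc.prems unfolding t_def by simp_all
  define \<sigma> where "\<sigma> = soph_aux T \<beta> v c k m"
  have \<sigma>: "\<sigma> u \<longleftrightarrow> t < u \<and> stop_grid T r T u" for u
    using Suc \<open>T - m = Suc t\<close> unfolding \<sigma>_def by (simp add: Suc_le_eq)
  have "no_stop_in_window r \<sigma> t \<longleftrightarrow> no_stop_in_window r (stop_grid T r T) t"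
    unfolding no_stop_in_window_def \<sigma> by blast
  also have "\<dots> \<longleftrightarrow> stop_grid T r T t"
  proof -
    have "\<not> t + Suc T * r \<le> T"
      using less_Suc_mult[of r T] r_ge_2 by linarith
    then show ?thesis
      using no_stop_grid_in_window_iff[OF \<open>t < T\<close>] r_ge_2 unfolding stop_grid_early_def
      by auto
  qed
  finally have upd: "upd T \<beta> v c k \<sigma> t \<longleftrightarrow> stop_grid T r T t"
    using upd_iff_no_stop_in_window[OF \<open>t < T\<close>] \<sigma> \<open>t < T\<close> by (simp add: stop_grid_def)
  have "soph_aux T \<beta> v c k (Suc m) = \<sigma>(t := upd T \<beta> v c k \<sigma> t)"
    unfolding soph_aux.simps Let_def \<sigma>_def[symmetric] t_def[symmetric] upd_def
    using \<open>t < T\<close> by simp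
  then show ?case
    unfolding t_def[symmetric] using upd \<sigma>[of s] by (cases "s = t") auto
qed

end

theorem proposition5p1:
  fixes T :: nat and v c k \<beta> :: real
  assumes "T \<ge> 1" and "v > 0" and "c > 0" and "k > 0"
    and "0 < \<beta>" and "\<beta> \<le> 1"
    and "k * real T < v"
    and "(1 - \<beta>) * c > \<beta> * k"
  defines "\<rho> \<equiv> \<lceil>(1 - \<beta>) * c / (\<beta> * k)\<rceil>"
  shows "\<rho> \<ge> 2 \<and>
    (\<forall>t\<le>T. trained T \<beta> v c k (nat (2 * (\<lceil>real (T + 1) / real_of_int \<rho>\<rceil> - 1))) t
             = soph T \<beta> v c k t)"
proof -
  have "1 < (1 - \<beta>) * c / (\<beta> * k)"
    using assms(4,5,8) by simp
  then have "2 \<le> \<rho>"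
    unfolding \<rho>_def by linarith
  define r where "r = nat \<rho>"
  have r: "\<lceil>(1 - \<beta>) * c / (\<beta> * k)\<rceil> = int r" "2 \<le> r"
    unfolding r_def \<rho>_def[symmetric] using \<open>2 \<le> \<rho>\<close> by simp_all
  define m where "m = nat (\<lceil>real (T + 1) / real r\<rceil> - 1)"
  have "real (T + 1) / real r \<le> real (Suc m)"
    unfolding m_def using r(2) by (simp add: ceiling_le_iff)
  then have "real (T + 1) \<le> real (Suc m * r)"
    using r(2) by (simp add: divide_le_eq distrib_right)
  then have "T < Suc m * r"
    by (simp only: of_nat_le_iff)
  have rounds: "nat (2 * (\<lceil>real (T + 1) / real_of_int \<rho>\<rceil> - 1)) = 2 * m"
    unfolding m_def \<rho>_def r(1) by simp
  have "T < Suc T * r"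
    using less_Suc_mult[of r T] r(2) by linarith
  have "stop_grid T r m t = soph T \<beta> v c k t" for t
    unfolding soph_def soph_aux_eq[OF assms(4,5) r order.refl]
    using stop_grid_saturated[OF _ \<open>T < Suc m * r\<close>] stop_grid_saturated[OF _ \<open>T < Suc T * r\<close>] r(2)
    by simp
  then show ?thesis
    unfolding rounds trained_even[OF assms(4,5) r] using \<open>2 \<le> \<rho>\<close> by simp
qed

end
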